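(* Let $\{\mathcal{K}^s:s\geq0\}$ be a strongly continuous one-parameter semigroup of isometries on a complex Hilbert space $\mathcal{H}$, let $\mathcal{H}_U=\bigcap_{s\geq0}\mathcal{K}^s\mathcal{H}$ and let $\mathcal{H}_{NU}=\mathcal{H}_U^{\perp}$. Then for every $h\in\mathcal{H}_{NU}$, $$\lim_{\tau\to\infty}\lambda_{h,\tau,1}=0.$$
   Context: A strongly continuous one-parameter semigroup of isometries means: each $\mathcal{K}^s$ is a linear isometry, $\mathcal{K}^0=I$, $\mathcal{K}^{s_1}\mathcal{K}^{s_2}=\mathcal{K}^{s_1+s_2}$, and $s\mapsto\mathcal{K}^sh$ is norm-continuous for each $h$. Inner products are linear in the first argument. For $h\in\mathcal{H}$ and $\tau>0$, $A_{h,\tau}$ is the operator on $L^2([0,\tau])$ defined by $(A_{h,\tau}g)(t)=\frac1\tau\int_0^\tau g(s)\langle\mathcal{K}^sh,\mathcal{K}^th\rangle\,ds$; it is a positive semidefinite self-adjoint compact operator, and $\lambda_{h,\tau,1}=\sup_{g\neq0}\langle A_{h,\tau}g,g\rangle/\|g\|^2$ is its largest eigenvalue. *)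

theory Defs
  imports "HOL-Analysis.Analysis"
begin

class complex_vector = real_vector +
  fixes scaleC :: "complex \<Rightarrow> 'a \<Rightarrow> 'a" (infixr "*\<^sub>C" 75)
  assumes scaleC_add_right: "scaleC a (x + y) = scaleC a x + scaleC a y"
    and scaleC_add_left: "scaleC (a + b) x = scaleC a x + scaleC b x"
    and scaleC_scaleC: "scaleC a (scaleC b x) = scaleC (a * b) x"
    and scaleC_one: "scaleC 1 x = x"
    and scaleR_scaleC: "scaleR r x = scaleC (complex_of_real r) x"

class complex_inner = complex_vector + real_normed_vector +
  fixes cinner :: "'a \<Rightarrow> 'a \<Rightarrow> complex"
  assumes cinner_commute: "cinner x y = cnj (cinner y x)"
    and cinner_add_left: "cinner (x + y) z = cinner x z + cinner y z"
    and cinner_scaleC_left: "cinner (scaleC r x) y = r * cinner x y"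
    and cinner_self_norm: "cinner x x = complex_of_real ((norm x)\<^sup>2)"

class chilbert_space = complex_inner + complete_space

definition strongly_cont_isometry_semigroup :: "(real \<Rightarrow> 'a::chilbert_space \<Rightarrow> 'a) \<Rightarrow> bool" where
  "strongly_cont_isometry_semigroup K \<longleftrightarrow>
     (\<forall>s\<ge>0. (\<forall>x y. K s (x + y) = K s x + K s y)
            \<and> (\<forall>c x. K s (c *\<^sub>C x) = c *\<^sub>C K s x)
            \<and> (\<forall>x. norm (K s x) = norm x))
   \<and> K 0 = id
   \<and> (\<forall>s1\<ge>0. \<forall>s2\<ge>0. K s1 \<circ> K s2 = K (s1 + s2))
   \<and> (\<forall>h. continuous_on {0..} (\<lambda>s. K s h))"

definition unitary_part :: "(real \<Rightarrow> 'a::chilbert_space \<Rightarrow> 'a) \<Rightarrow> 'a set" where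
  "unitary_part K = (\<Inter>s\<in>{0..}. range (K s))"

definition nonunitary_part :: "(real \<Rightarrow> 'a::chilbert_space \<Rightarrow> 'a) \<Rightarrow> 'a set" where
  "nonunitary_part K = {h. \<forall>u\<in>unitary_part K. cinner h u = 0}"

definition L2_on :: "real \<Rightarrow> (real \<Rightarrow> complex) set" where
  "L2_on \<tau> = {g. g \<in> borel_measurable (lebesgue_on {0..\<tau>})
                 \<and> integrable (lebesgue_on {0..\<tau>}) (\<lambda>t. (cmod (g t))\<^sup>2)}"

definition L2_norm_sq :: "real \<Rightarrow> (real \<Rightarrow> complex) \<Rightarrow> real" where
  "L2_norm_sq \<tau> g = integral\<^sup>L (lebesgue_on {0..\<tau>}) (\<lambda>t. (cmod (g t))\<^sup>2)"

definition A_op :: "(real \<Rightarrow> 'a::chilbert_space \<Rightarrow> 'a) \<Rightarrow> 'a \<Rightarrow> real \<Rightarrow> (real \<Rightarrow> complex) \<Rightarrow> real \<Rightarrow> complex" where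
  "A_op K h \<tau> g t = complex_of_real (1 / \<tau>) *
     integral\<^sup>L (lebesgue_on {0..\<tau>}) (\<lambda>s. g s * cinner (K s h) (K t h))"

definition A_form :: "(real \<Rightarrow> 'a::chilbert_space \<Rightarrow> 'a) \<Rightarrow> 'a \<Rightarrow> real \<Rightarrow> (real \<Rightarrow> complex) \<Rightarrow> complex" where
  "A_form K h \<tau> g = integral\<^sup>L (lebesgue_on {0..\<tau>}) (\<lambda>t. A_op K h \<tau> g t * cnj (g t))"

text \<open>\<open>\<lambda>_{h,\<tau>,1} = sup_{g \<noteq> 0} \<langle>A g, g\<rangle> / \<parallel>g\<parallel>^2\<close>; the quadratic form is real
  since \<open>A\<close> is self-adjoint, so we take its real part.\<close>
definition lambda1 :: "(real \<Rightarrow> 'a::chilbert_space \<Rightarrow> 'a) \<Rightarrow> 'a \<Rightarrow> real \<Rightarrow> real" where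
  "lambda1 K h \<tau> = Sup {Re (A_form K h \<tau> g) / L2_norm_sq \<tau> g | g. g \<in> L2_on \<tau> \<and> L2_norm_sq \<tau> g \<noteq> 0}"

end

theory Submission
  imports Defs
begin

text \<open>For \<open>h \<perp> H_U\<close> the correlation \<open>\<langle>K^r h, h\<rangle>\<close> tends to \<open>0\<close>: if \<open>P_n\<close> is the orthogonal
  projection of \<open>h\<close> onto \<open>K^n H\<close>, then \<open>\<langle>K^r h, h\<rangle> = \<langle>K^r h, P_n\<rangle>\<close> for \<open>r \<ge> n\<close>, and the
  projections onto the decreasing closed subspaces \<open>K^n H\<close> converge to the projection onto their
  intersection \<open>H_U\<close>, which is \<open>0\<close>.
  Since \<open>|\<langle>K^s h, K^t h\<rangle>| = |\<langle>K^|s - t| h, h\<rangle>|\<close>, the kernel of \<open>A_{h,\<tau>}\<close> is bounded by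
  \<open>\<parallel>h\<parallel>\<^sup>2\<close> and is below any given \<open>e\<close> outside a band \<open>|s - t| < R\<close> of fixed width. Cauchy--Schwarz
  then gives \<open>|\<langle>A g, g\<rangle>| \<le> (e + \<parallel>h\<parallel>\<^sup>2 sqrt (2 R / \<tau>)) \<parallel>g\<parallel>\<^sup>2\<close>, so \<open>\<lambda>_{h,\<tau>,1} \<longrightarrow> 0\<close>.\<close>

section \<open>Complex inner product spaces\<close>

lemma cinner_zero_left [simp]: "cinner 0 (y::'a::complex_inner) = 0"
  using cinner_add_left[of "0::'a" 0 y] by simp

lemma cinner_add_right: "cinner (x::'a::complex_inner) (y + z) = cinner x y + cinner x z"
  by (metis cinner_add_left cinner_commute complex_cnj_add)

lemma cinner_zero_right [simp]: "cinner (x::'a::complex_inner) 0 = 0"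
  using cinner_add_right[of x "0::'a" 0] by simp

lemma cinner_scaleC_right: "cinner (x::'a::complex_inner) (c *\<^sub>C y) = cnj c * cinner x y"
  by (metis cinner_commute cinner_scaleC_left complex_cnj_mult)

lemma cinner_diff_left: "cinner ((x::'a::complex_inner) - y) z = cinner x z - cinner y z"
  by (metis cinner_add_left eq_diff_eq)

lemma cinner_diff_right: "cinner (x::'a::complex_inner) (y - z) = cinner x y - cinner x z"
  by (metis cinner_add_right eq_diff_eq)

lemma cinner_scaleR_left: "cinner (r *\<^sub>R (x::'a::complex_inner)) y = of_real r * cinner x y"
  by (simp add: scaleR_scaleC cinner_scaleC_left)

lemma cinner_scaleR_right: "cinner (x::'a::complex_inner) (r *\<^sub>R y) = of_real r * cinner x y"
  by (simp add: scaleR_scaleC cinner_scaleC_right)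

lemma cinner_self_eq_zero_iff [simp]: "cinner (x::'a::complex_inner) x = 0 \<longleftrightarrow> x = 0"
  by (simp add: cinner_self_norm)

lemma power2_norm_add:
  "(norm ((x::'a::complex_inner) + y))\<^sup>2 = (norm x)\<^sup>2 + (norm y)\<^sup>2 + 2 * Re (cinner x y)"
proof -
  have "cinner (x + y) (x + y) = cinner x x + cinner y y + (cinner x y + cnj (cinner x y))"
    by (simp add: cinner_add_left cinner_add_right algebra_simps flip: cinner_commute)
  then have "Re (cinner (x + y) (x + y)) = Re (cinner x x) + Re (cinner y y) + 2 * Re (cinner x y)"
    by simp
  then show ?thesis
    by (simp add: cinner_self_norm)
qed

lemma power2_norm_diff:
  "(norm ((x::'a::complex_inner) - y))\<^sup>2 = (norm x)\<^sup>2 + (norm y)\<^sup>2 - 2 * Re (cinner x y)"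
proof -
  have "cinner x (- y) = - cinner x y"
    using cinner_add_right[of x y "- y"] by (simp add: add_eq_0_iff)
  then show ?thesis
    using power2_norm_add[of x "- y"] by simp
qed

lemma parallelogram_law:
  "(norm ((x::'a::complex_inner) - y))\<^sup>2 + (norm (x + y))\<^sup>2 = 2 * (norm x)\<^sup>2 + 2 * (norm y)\<^sup>2"
  by (simp add: power2_norm_add power2_norm_diff)

lemma norm_scaleC: "norm (c *\<^sub>C (x::'a::complex_inner)) = cmod c * norm x"
proof -
  have "cinner (c *\<^sub>C x) (c *\<^sub>C x) = (c * cnj c) * cinner x x"
    by (simp add: cinner_scaleC_left cinner_scaleC_right mult.assoc)
  also have "c * cnj c = of_real ((cmod c)\<^sup>2)"
    by (rule complex_norm_square[symmetric])
  finally have "(norm (c *\<^sub>C x))\<^sup>2 = (cmod c)\<^sup>2 * (norm x)\<^sup>2"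
    by (simp add: cinner_self_norm flip: of_real_mult of_real_power)
  then show ?thesis
    by (simp add: power_mult_distrib[symmetric])
qed

lemma Re_cinner_le: "Re (cinner (x::'a::complex_inner) y) \<le> norm x * norm y"
proof -
  have "(norm (x + y))\<^sup>2 \<le> (norm x + norm y)\<^sup>2"
    by (simp add: norm_triangle_ineq power_mono)
  then show ?thesis
    by (simp add: power2_norm_add power2_sum)
qed

text \<open>Cauchy--Schwarz: rotate \<open>x\<close> by a unimodular factor making \<open>\<langle>x, y\<rangle>\<close> real.\<close>
lemma norm_cinner_le: "cmod (cinner (x::'a::complex_inner) y) \<le> norm x * norm y"
proof (cases "cinner x y = 0")
  case False
  define c where "c = cnj (cinner x y) / cmod (cinner x y)"
  have "cmod c = 1"
    using False by (simp add: c_def norm_divide)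
  moreover have "c * cinner x y = cmod (cinner x y)"
    using False by (simp add: c_def complex_norm_square[symmetric] power2_eq_square mult.commute)
  ultimately show ?thesis
    using Re_cinner_le[of "c *\<^sub>C x" y] by (simp add: cinner_scaleC_left norm_scaleC)
qed simp

lemma bounded_bilinear_cinner: "bounded_bilinear (cinner :: 'a::complex_inner \<Rightarrow> 'a \<Rightarrow> complex)"
proof
  show "\<exists>K. \<forall>a b::'a. norm (cinner a b) \<le> norm a * norm b * K"
    by (intro exI[of _ 1]) (simp add: norm_cinner_le)
qed (simp_all add: cinner_add_left cinner_add_right cinner_scaleR_left cinner_scaleR_right
       scaleR_conv_of_real)

section \<open>Orthogonal projections\<close>

definition csubspace :: "'a::complex_vector set \<Rightarrow> bool" where
  "csubspace M \<longleftrightarrow> 0 \<in> M \<and> (\<forall>x\<in>M. \<forall>y\<in>M. x + y \<in> M) \<and> (\<forall>c. \<forall>x\<in>M. c *\<^sub>C x \<in> M)"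

lemma csubspace_imp_convex: "csubspace M \<Longrightarrow> convex M"
  unfolding csubspace_def convex_def by (simp add: scaleR_scaleC)

lemma Cauchy_if_power2_dist_bound:
  fixes f :: "nat \<Rightarrow> 'a::real_normed_vector"
  assumes bound: "\<And>i j. (norm (f i - f j))\<^sup>2 \<le> b i + b j" and b: "b \<longlonglongrightarrow> 0"
  shows "Cauchy f"
proof (rule metric_CauchyI)
  fix e :: real
  assume "0 < e"
  then have "eventually (\<lambda>n. b n < e\<^sup>2 / 2) sequentially"
    using b by (intro order_tendstoD) auto
  then obtain N where N: "\<And>n. n \<ge> N \<Longrightarrow> b n < e\<^sup>2 / 2"
    unfolding eventually_sequentially by blast
  have "dist (f i) (f j) < e" if "i \<ge> N" "j \<ge> N" for i j
  proof -
    have "(norm (f i - f j))\<^sup>2 < e\<^sup>2"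
      using bound[of i j] N[OF that(1)] N[OF that(2)] by linarith
    then show ?thesis
      using \<open>0 < e\<close> by (simp add: dist_norm power2_less_imp_less)
  qed
  then show "\<exists>N. \<forall>i\<ge>N. \<forall>j\<ge>N. dist (f i) (f j) < e"
    by blast
qed

lemma nearest_point_exists:
  fixes M :: "'a::chilbert_space set"
  assumes "closed M" "convex M" "M \<noteq> {}"
  shows "\<exists>p\<in>M. \<forall>m\<in>M. norm (h - p) \<le> norm (h - m)"
proof -
  define d where "d = (INF m\<in>M. (norm (h - m))\<^sup>2)"
  have bdd: "bdd_below ((\<lambda>m. (norm (h - m))\<^sup>2) ` M)"
    by (auto intro: bdd_belowI[of _ 0])
  have d_le: "d \<le> (norm (h - m))\<^sup>2" if "m \<in> M" for m
    unfolding d_def using bdd that by (rule cINF_lower)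
  have "\<exists>m\<in>M. (norm (h - m))\<^sup>2 < d + inverse (Suc n)" for n :: nat
    using cINF_less_iff[OF assms(3) bdd, of "d + inverse (Suc n)"] unfolding d_def
    by (simp del: of_nat_Suc)
  then obtain f where f: "\<And>n. f n \<in> M" "\<And>n. (norm (h - f n))\<^sup>2 < d + inverse (Suc n)"
    by metis
  have "Cauchy f"
  proof (rule Cauchy_if_power2_dist_bound)
    fix i j
    have "(1/2::real) *\<^sub>R f i + (1/2::real) *\<^sub>R f j \<in> M"
      using \<open>convex M\<close> f(1) unfolding convex_def by auto
    moreover have "(h - f i) + (h - f j) = 2 *\<^sub>R (h - ((1/2::real) *\<^sub>R f i + (1/2::real) *\<^sub>R f j))"
      by (simp add: algebra_simps scaleR_2)
    ultimately have "4 * d \<le> (norm ((h - f i) + (h - f j)))\<^sup>2"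
      using d_le by (simp add: power_mult_distrib)
    then show "(norm (f i - f j))\<^sup>2 \<le> 2 * inverse (Suc i) + 2 * inverse (Suc j)"
      using parallelogram_law[of "h - f i" "h - f j"] f(2)[of i] f(2)[of j]
      by (simp add: norm_minus_commute)
  next
    show "(\<lambda>n. 2 * inverse (real (Suc n))) \<longlonglongrightarrow> 0"
      using tendsto_mult_right_zero[OF LIMSEQ_inverse_real_of_nat] by simp
  qed
  then obtain p where lim: "f \<longlonglongrightarrow> p"
    using Cauchy_convergent_iff convergent_def by blast
  have "p \<in> M"
    using closed_sequentially[OF \<open>closed M\<close> _ lim] f(1) by blast
  moreover have "(norm (h - p))\<^sup>2 \<le> d"
  proof (rule LIMSEQ_le)
    show "(\<lambda>n. (norm (h - f n))\<^sup>2) \<longlonglongrightarrow> (norm (h - p))\<^sup>2"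
      by (intro tendsto_intros lim)
    show "(\<lambda>n. d + inverse (real (Suc n))) \<longlonglongrightarrow> d"
      using tendsto_add[OF tendsto_const LIMSEQ_inverse_real_of_nat, of d] by simp
  qed (use f(2) less_imp_le in blast)
  ultimately show ?thesis
    using d_le by (meson order_trans power2_le_imp_le norm_ge_zero)
qed

lemma nearest_point_orthogonal:
  fixes M :: "'a::complex_inner set"
  assumes M: "csubspace M" and "p \<in> M" "m \<in> M"
    and nearest: "\<And>m. m \<in> M \<Longrightarrow> norm (h - p) \<le> norm (h - m)"
  shows "cinner (h - p) m = 0"
proof (cases "m = 0")
  case False
  define z where "z = cinner (h - p) m"
  define c where "c = z / of_real ((norm m)\<^sup>2)"
  have m2: "(norm m)\<^sup>2 > 0"
    using False by simp
  have "p + c *\<^sub>C m \<in> M"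
    using M \<open>p \<in> M\<close> \<open>m \<in> M\<close> by (simp add: csubspace_def)
  then have "(norm (h - p))\<^sup>2 \<le> (norm ((h - p) - c *\<^sub>C m))\<^sup>2"
    using nearest by (simp add: diff_diff_eq power_mono)
  also have "\<dots> = (norm (h - p))\<^sup>2 + (cmod c * norm m)\<^sup>2 - 2 * Re (cnj c * z)"
    by (simp add: power2_norm_diff norm_scaleC cinner_scaleC_right z_def)
  also have "cnj c * z = of_real ((cmod z)\<^sup>2 / (norm m)\<^sup>2)"
    by (simp add: c_def complex_norm_square[symmetric] mult.commute)
  also have "(cmod c * norm m)\<^sup>2 = (cmod z)\<^sup>2 / (norm m)\<^sup>2"
    using m2 by (simp add: c_def norm_divide norm_mult power2_eq_square)
  finally have "(cmod z)\<^sup>2 / (norm m)\<^sup>2 \<le> 0"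
    by simp
  then show ?thesis
    using m2 by (simp add: z_def divide_le_0_iff)
qed simp

lemma orthogonal_projection_exists:
  fixes M :: "'a::chilbert_space set"
  assumes "closed M" "csubspace M"
  shows "\<exists>p\<in>M. \<forall>m\<in>M. cinner (h - p) m = 0"
proof -
  have "M \<noteq> {}"
    using \<open>csubspace M\<close> by (auto simp: csubspace_def)
  then obtain p where "p \<in> M" "\<forall>m\<in>M. norm (h - p) \<le> norm (h - m)"
    using nearest_point_exists[OF \<open>closed M\<close> csubspace_imp_convex[OF \<open>csubspace M\<close>]] by blast
  then show ?thesis
    using nearest_point_orthogonal[OF \<open>csubspace M\<close>] by blast
qed

lemma orthogonal_projection_pythagoras:
  assumes "M' \<subseteq> M" "p' \<in> M'"
    and "\<And>m. m \<in> M \<Longrightarrow> cinner (h - p) m = 0" and "\<And>m. m \<in> M' \<Longrightarrow> cinner (h - p') m = 0"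
  shows "(norm p)\<^sup>2 = (norm p')\<^sup>2 + (norm (p - p'))\<^sup>2"
proof -
  have "cinner (p - p') p' = cinner (h - p') p' - cinner (h - p) p'"
    by (simp add: cinner_diff_left)
  also have "\<dots> = 0"
    using assms by auto
  finally show ?thesis
    using power2_norm_add[of "p - p'" p'] by simp
qed

lemma projections_decseq_tendsto:
  fixes M :: "nat \<Rightarrow> 'a::chilbert_space set"
  assumes "decseq M" and closed: "\<And>n. closed (M n)" and P: "\<And>n. P n \<in> M n"
    and orth: "\<And>n m. m \<in> M n \<Longrightarrow> cinner (h - P n) m = 0"
  obtains y where "P \<longlonglongrightarrow> y" "\<And>n. y \<in> M n" "\<And>m. m \<in> (\<Inter>n. M n) \<Longrightarrow> cinner (h - y) m = 0"
proof -
  have pyth: "(norm (P n))\<^sup>2 = (norm (P m))\<^sup>2 + (norm (P n - P m))\<^sup>2" if "n \<le> m" for n m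
  proof (rule orthogonal_projection_pythagoras[where M' = "M m" and M = "M n" and h = h])
    show "M m \<subseteq> M n"
      using \<open>decseq M\<close> that by (simp add: decseq_def)
  qed (use P orth in auto)
  define a where "a n = (norm (P n))\<^sup>2" for n
  have "a m \<le> a n" if "n \<le> m" for n m
    using pyth[OF that] by (simp add: a_def)
  then have "decseq a"
    by (simp add: decseq_def)
  then obtain L where "a \<longlonglongrightarrow> L" and L: "\<And>n. L \<le> a n"
    using decseq_convergent[of a 0] by (auto simp: a_def)
  have "Cauchy P"
  proof (rule Cauchy_if_power2_dist_bound)
    show "(norm (P i - P j))\<^sup>2 \<le> (a i - L) + (a j - L)" for i j
    proof (cases "i \<le> j")
      case True
      then show ?thesis
        using pyth[OF True] L[of j] unfolding a_def by linarith
    next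
      case False
      then show ?thesis
        using pyth[of j i] L[of i] unfolding a_def by (simp add: norm_minus_commute)
    qed
    show "(\<lambda>n. a n - L) \<longlonglongrightarrow> 0"
      using \<open>a \<longlonglongrightarrow> L\<close> by (simp add: LIM_zero)
  qed
  then obtain y where y: "P \<longlonglongrightarrow> y"
    using Cauchy_convergent_iff convergent_def by blast
  moreover have "y \<in> M k" for k
  proof (rule closed_sequentially[OF closed _ LIMSEQ_ignore_initial_segment[OF y, of k]])
    show "P (n + k) \<in> M k" for n
      using P[of "n + k"] \<open>decseq M\<close> unfolding decseq_def by (meson le_add2 subsetD)
  qed
  moreover have "cinner (h - y) m = 0" if "m \<in> (\<Inter>n. M n)" for m
  proof -
    have "(\<lambda>n. cinner (h - P n) m) \<longlonglongrightarrow> cinner (h - y) m"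
      by (intro bounded_bilinear.tendsto[OF bounded_bilinear_cinner] tendsto_intros y)
    then show ?thesis
      using orth that by (simp add: LIMSEQ_const_iff)
  qed
  ultimately show ?thesis
    using that by blast
qed

section \<open>Integral estimates for banded kernels\<close>

lemma Cauchy_Schwarz_integral:
  fixes f g :: "'b \<Rightarrow> real"
  assumes [measurable]: "f \<in> borel_measurable M" "g \<in> borel_measurable M"
    and f2: "integrable M (\<lambda>x. (f x)\<^sup>2)" and g2: "integrable M (\<lambda>x. (g x)\<^sup>2)"
  shows "integrable M (\<lambda>x. \<bar>f x\<bar> * \<bar>g x\<bar>)"
    and "(\<integral>x. \<bar>f x\<bar> * \<bar>g x\<bar> \<partial>M) \<le> sqrt ((\<integral>x. (f x)\<^sup>2 \<partial>M) * (\<integral>x. (g x)\<^sup>2 \<partial>M))"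
proof -
  show fg: "integrable M (\<lambda>x. \<bar>f x\<bar> * \<bar>g x\<bar>)"
  proof (rule Bochner_Integration.integrable_bound[where f = "\<lambda>x. (f x)\<^sup>2 + (g x)\<^sup>2"])
    have "\<bar>f x\<bar> * \<bar>g x\<bar> \<le> (f x)\<^sup>2 + (g x)\<^sup>2" for x
      using sum_squares_bound[of "\<bar>f x\<bar>" "\<bar>g x\<bar>"] abs_ge_zero[of "f x * g x"]
      unfolding mult.assoc power2_abs abs_mult by linarith
    then show "AE x in M. norm (\<bar>f x\<bar> * \<bar>g x\<bar>) \<le> norm ((f x)\<^sup>2 + (g x)\<^sup>2)"
      by (simp add: abs_mult)
  qed (use f2 g2 in simp_all)
  have "ennreal ((\<integral>x. \<bar>f x\<bar> * \<bar>g x\<bar> \<partial>M)\<^sup>2) = (\<integral>\<^sup>+x. ennreal \<bar>f x\<bar> * ennreal \<bar>g x\<bar> \<partial>M)\<^sup>2"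
    using nn_integral_eq_integral[OF fg] by (simp add: ennreal_mult ennreal_power)
  also have "\<dots> \<le> (\<integral>\<^sup>+x. ennreal \<bar>f x\<bar> ^ 2 \<partial>M) * (\<integral>\<^sup>+x. ennreal \<bar>g x\<bar> ^ 2 \<partial>M)"
    by (rule Cauchy_Schwarz_nn_integral) simp_all
  also have "\<dots> = ennreal ((\<integral>x. (f x)\<^sup>2 \<partial>M) * (\<integral>x. (g x)\<^sup>2 \<partial>M))"
    using nn_integral_eq_integral[OF f2] nn_integral_eq_integral[OF g2]
    by (simp add: ennreal_power ennreal_mult)
  finally show "(\<integral>x. \<bar>f x\<bar> * \<bar>g x\<bar> \<partial>M) \<le> sqrt ((\<integral>x. (f x)\<^sup>2 \<partial>M) * (\<integral>x. (g x)\<^sup>2 \<partial>M))"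
    by (intro real_le_rsqrt) simp
qed

lemma L2_on_integral_norm_le:
  assumes "g \<in> L2_on \<tau>" "\<tau> \<ge> 0"
  shows "integrable (lebesgue_on {0..\<tau>}) (\<lambda>t. cmod (g t))"
    and "(\<integral>t. cmod (g t) \<partial>lebesgue_on {0..\<tau>}) \<le> sqrt (L2_norm_sq \<tau> g * \<tau>)"
proof -
  let ?M = "lebesgue_on {0..\<tau>}"
  have [measurable]: "g \<in> borel_measurable ?M" and g2: "integrable ?M (\<lambda>t. (cmod (g t))\<^sup>2)"
    using assms(1) by (auto simp: L2_on_def)
  have "integral\<^sup>L ?M (\<lambda>_. 1::real) = \<tau>"
    using assms(2) by (simp add: measure_restrict_space)
  then show "integrable ?M (\<lambda>t. cmod (g t))"
    and "(\<integral>t. cmod (g t) \<partial>?M) \<le> sqrt (L2_norm_sq \<tau> g * \<tau>)"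
    using Cauchy_Schwarz_integral[of "\<lambda>t. cmod (g t)" ?M "\<lambda>_. 1"] g2
    by (simp_all add: L2_norm_sq_def)
qed

lemma indicator_interval_L2:
  fixes a b \<tau> :: real
  assumes "0 \<le> a" "b \<le> \<tau>"
  shows "indicator {a..b} \<in> borel_measurable (lebesgue_on {0..\<tau>})"
    and "integrable (lebesgue_on {0..\<tau>}) (\<lambda>x. (indicator {a..b} x :: real)\<^sup>2)"
    and "(\<integral>x. (indicator {a..b} x :: real)\<^sup>2 \<partial>lebesgue_on {0..\<tau>}) \<le> max 0 (b - a)"
proof -
  have ab: "{a..b} \<in> sets (lebesgue_on {0..\<tau>})"
    using assms by (simp add: sets_restrict_space_iff)
  have sq: "(\<lambda>x. (indicator {a..b} x :: real)\<^sup>2) = indicator {a..b}"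
    by (auto simp: indicator_def)
  show "indicator {a..b} \<in> borel_measurable (lebesgue_on {0..\<tau>})"
    using ab by measurable
  show "integrable (lebesgue_on {0..\<tau>}) (\<lambda>x. (indicator {a..b} x :: real)\<^sup>2)"
    unfolding sq
    by (rule Bochner_Integration.integrable_bound[of _ "\<lambda>_. 1::real"])
       (use ab in \<open>auto simp: indicator_def\<close>)
  have "(\<integral>x. (indicator {a..b} x :: real)\<^sup>2 \<partial>lebesgue_on {0..\<tau>}) = measure lebesgue {a..b}"
    unfolding sq using ab assms by (simp add: measure_restrict_space Int_absorb1)
  then show "(\<integral>x. (indicator {a..b} x :: real)\<^sup>2 \<partial>lebesgue_on {0..\<tau>}) \<le> max 0 (b - a)"
    by simp
qed

text \<open>Split the row integral at the band \<open>|s - t| < R\<close>: off the band the kernel is at most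
  \<open>e\<close>, on it at most \<open>B\<close>, and Cauchy--Schwarz bounds \<open>\<integral> |g|\<close> over \<open>[0, \<tau>]\<close> and over the band.
  No measurability of \<open>k\<close> is needed (hence none of the semigroup's continuity): \<open>|\<integral> f| \<le> \<integral> |f|\<close>
  and comparison with an integrable majorant hold for arbitrary \<open>f\<close>, whose Bochner integral is
  \<open>0\<close> when it is not integrable.\<close>
lemma banded_kernel_row_bound:
  fixes g k :: "real \<Rightarrow> complex"
  assumes "\<tau> \<ge> 0" "g \<in> L2_on \<tau>" "e \<ge> 0" "B \<ge> 0" "R \<ge> 0" "t \<in> {0..\<tau>}"
    and bounded: "\<And>s. s \<in> {0..\<tau>} \<Longrightarrow> cmod (k s) \<le> B"
    and small: "\<And>s. s \<in> {0..\<tau>} \<Longrightarrow> R \<le> \<bar>s - t\<bar> \<Longrightarrow> cmod (k s) \<le> e"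
  shows "cmod (\<integral>s. g s * k s \<partial>lebesgue_on {0..\<tau>})
           \<le> e * sqrt (L2_norm_sq \<tau> g * \<tau>) + B * sqrt (L2_norm_sq \<tau> g * (2 * R))"
proof -
  let ?M = "lebesgue_on {0..\<tau>}"
  define G where "G s = cmod (g s)" for s
  define N where "N = L2_norm_sq \<tau> g"
  define a where "a = max (t - R) 0"
  define b where "b = min (t + R) \<tau>"
  define I where "I = (indicator {a..b} :: real \<Rightarrow> real)"
  have ab: "0 \<le> a" "b \<le> \<tau>"
    by (auto simp: a_def b_def)
  have [measurable]: "g \<in> borel_measurable ?M" and G2: "integrable ?M (\<lambda>s. (G s)\<^sup>2)"
    using \<open>g \<in> L2_on \<tau>\<close> by (auto simp: L2_on_def G_def)
  have [measurable]: "G \<in> borel_measurable ?M"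
    unfolding G_def by measurable
  note I_L2 = indicator_interval_L2[OF ab]
  note G_int = L2_on_integral_norm_le[OF \<open>g \<in> L2_on \<tau>\<close> \<open>\<tau> \<ge> 0\<close>, folded G_def N_def]
  have I_nonneg: "\<bar>I s\<bar> = I s" for s
    by (simp add: I_def)
  have GI: "integrable ?M (\<lambda>s. G s * I s)"
    "(\<integral>s. G s * I s \<partial>?M) \<le> sqrt (N * (\<integral>s. (I s)\<^sup>2 \<partial>?M))"
    using Cauchy_Schwarz_integral[of G ?M I] I_L2 G2
    by (simp_all add: I_nonneg I_def G_def N_def L2_norm_sq_def)
  have band: "(\<integral>s. G s * I s \<partial>?M) \<le> sqrt (N * (2 * R))"
  proof -
    note GI(2)
    also have "\<dots> \<le> sqrt (N * (2 * R))"
    proof -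
      have "max 0 (b - a) \<le> 2 * R"
        using \<open>R \<ge> 0\<close> by (simp add: a_def b_def)
      then have "(\<integral>s. (I s)\<^sup>2 \<partial>?M) \<le> 2 * R"
        using I_L2(3) unfolding I_def by linarith
      then show ?thesis
        by (simp add: N_def L2_norm_sq_def mult_left_mono)
    qed
    finally show ?thesis .
  qed
  have pointwise: "cmod (g s * k s) \<le> e * G s + B * (G s * I s)" if "s \<in> space ?M" for s
  proof -
    have s: "s \<in> {0..\<tau>}"
      using that by simp
    have G0: "0 \<le> G s" and I0: "0 \<le> I s"
      by (simp_all add: G_def I_def)
    show ?thesis
    proof (cases "R \<le> \<bar>s - t\<bar>")
      case True
      then have "cmod (g s * k s) \<le> G s * e"
        unfolding G_def norm_mult using small[OF s] by (simp add: mult_left_mono)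
      then show ?thesis
        using G0 I0 \<open>B \<ge> 0\<close> by (simp add: add_increasing2 mult.commute)
    next
      case False
      then have "s \<in> {a..b}"
        using s by (auto simp: a_def b_def)
      then have "I s = 1"
        by (simp add: I_def)
      moreover have "cmod (g s * k s) \<le> G s * B"
        unfolding G_def norm_mult using bounded[OF s] by (simp add: mult_left_mono)
      ultimately show ?thesis
        using G0 \<open>e \<ge> 0\<close> by (simp add: add_increasing mult.commute)
    qed
  qed
  have "cmod (\<integral>s. g s * k s \<partial>?M) \<le> (\<integral>s. cmod (g s * k s) \<partial>?M)"
    by (rule integral_norm_bound)
  also have "\<dots> \<le> (\<integral>s. e * G s + B * (G s * I s) \<partial>?M)"
    using pointwise G_int(1) GI(1) \<open>e \<ge> 0\<close> \<open>B \<ge> 0\<close>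
    by (intro integral_mono') (auto simp: G_def I_def)
  also have "\<dots> = e * (\<integral>s. G s \<partial>?M) + B * (\<integral>s. G s * I s \<partial>?M)"
    using G_int(1) GI(1) by (simp add: G_def I_def)
  also have "\<dots> \<le> e * sqrt (N * \<tau>) + B * sqrt (N * (2 * R))"
    using G_int(2) band \<open>e \<ge> 0\<close> \<open>B \<ge> 0\<close> by (intro add_mono mult_left_mono) (auto simp: G_def)
  finally show ?thesis
    by (simp add: N_def)
qed

lemma banded_kernel_form_bound:
  fixes g :: "real \<Rightarrow> complex" and k :: "real \<Rightarrow> real \<Rightarrow> complex"
  assumes "\<tau> > 0" "g \<in> L2_on \<tau>" "e \<ge> 0" "B \<ge> 0" "R \<ge> 0"
    and bounded: "\<And>s t. s \<in> {0..\<tau>} \<Longrightarrow> t \<in> {0..\<tau>} \<Longrightarrow> cmod (k s t) \<le> B"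
    and small: "\<And>s t. s \<in> {0..\<tau>} \<Longrightarrow> t \<in> {0..\<tau>} \<Longrightarrow> R \<le> \<bar>s - t\<bar> \<Longrightarrow> cmod (k s t) \<le> e"
    and long: "B * sqrt (2 * R * \<tau>) \<le> e * \<tau>"
  shows "cmod (\<integral>t. (of_real (1 / \<tau>) * (\<integral>s. g s * k s t \<partial>lebesgue_on {0..\<tau>})) * cnj (g t)
                  \<partial>lebesgue_on {0..\<tau>})
           \<le> 2 * e * L2_norm_sq \<tau> g"
proof -
  let ?M = "lebesgue_on {0..\<tau>}"
  define N where "N = L2_norm_sq \<tau> g"
  define C where "C = (e * sqrt (N * \<tau>) + B * sqrt (N * (2 * R))) / \<tau>"
  have N: "N \<ge> 0"
    by (simp add: N_def L2_norm_sq_def)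
  have C: "C \<ge> 0"
    using \<open>\<tau> > 0\<close> \<open>e \<ge> 0\<close> \<open>B \<ge> 0\<close> \<open>R \<ge> 0\<close> N by (simp add: C_def)
  note g_int = L2_on_integral_norm_le[OF \<open>g \<in> L2_on \<tau>\<close> less_imp_le[OF \<open>\<tau> > 0\<close>], folded N_def]
  have row: "cmod (of_real (1 / \<tau>) * (\<integral>s. g s * k s t \<partial>?M)) \<le> C" if "t \<in> {0..\<tau>}" for t
    using banded_kernel_row_bound[of \<tau> g e B R t "\<lambda>s. k s t"] assms that
    by (simp add: C_def N_def norm_divide divide_right_mono)
  have "cmod (\<integral>t. (of_real (1 / \<tau>) * (\<integral>s. g s * k s t \<partial>?M)) * cnj (g t) \<partial>?M)
      \<le> (\<integral>t. cmod ((of_real (1 / \<tau>) * (\<integral>s. g s * k s t \<partial>?M)) * cnj (g t)) \<partial>?M)"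
    by (rule integral_norm_bound)
  also have "\<dots> \<le> (\<integral>t. C * cmod (g t) \<partial>?M)"
  proof (rule integral_mono')
    show "integrable ?M (\<lambda>t. C * cmod (g t))"
      using g_int(1) by simp
    fix t
    assume "t \<in> space ?M"
    then have "t \<in> {0..\<tau>}"
      by simp
    show "cmod ((of_real (1 / \<tau>) * (\<integral>s. g s * k s t \<partial>?M)) * cnj (g t)) \<le> C * cmod (g t)"
      unfolding norm_mult[of _ "cnj (g t)"] complex_mod_cnj using row[OF \<open>t \<in> {0..\<tau>}\<close>]
      by (rule mult_right_mono) simp
    show "0 \<le> C * cmod (g t)"
      using C by simp
  qed
  also have "\<dots> \<le> C * sqrt (N * \<tau>)"
    using g_int(2) C by (simp add: mult_left_mono)
  also have "\<dots> = (e * (sqrt (N * \<tau>) * sqrt (N * \<tau>)) + B * (sqrt (N * (2 * R)) * sqrt (N * \<tau>))) / \<tau>"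
    by (simp add: C_def algebra_simps)
  also have "sqrt (N * \<tau>) * sqrt (N * \<tau>) = N * \<tau>"
    using N \<open>\<tau> > 0\<close> by simp
  also have "sqrt (N * (2 * R)) * sqrt (N * \<tau>) = N * sqrt (2 * R * \<tau>)"
  proof -
    have "sqrt (N * (2 * R)) * sqrt (N * \<tau>) = sqrt (N\<^sup>2 * (2 * R * \<tau>))"
      by (simp add: power2_eq_square algebra_simps flip: real_sqrt_mult)
    then show ?thesis
      using N by (simp add: real_sqrt_mult)
  qed
  also have "(e * (N * \<tau>) + B * (N * sqrt (2 * R * \<tau>))) / \<tau> \<le> (e * (N * \<tau>) + N * (e * \<tau>)) / \<tau>"
    using long N \<open>\<tau> > 0\<close>
    by (intro divide_right_mono add_left_mono) (simp_all add: mult.left_commute[of B] mult_left_mono)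
  also have "\<dots> = 2 * e * N"
    using \<open>\<tau> > 0\<close> by (simp add: field_simps)
  finally show ?thesis
    by (simp add: N_def)
qed

lemma abs_lambda1_le:
  assumes "\<tau> > 0" and bound: "\<And>g. g \<in> L2_on \<tau> \<Longrightarrow> cmod (A_form K h \<tau> g) \<le> B * L2_norm_sq \<tau> g"
  shows "\<bar>lambda1 K h \<tau>\<bar> \<le> B"
proof -
  define S where "S = {Re (A_form K h \<tau> g) / L2_norm_sq \<tau> g | g. g \<in> L2_on \<tau> \<and> L2_norm_sq \<tau> g \<noteq> 0}"
  have S_bound: "\<bar>x\<bar> \<le> B" if "x \<in> S" for x
  proof -
    obtain g where x: "x = Re (A_form K h \<tau> g) / L2_norm_sq \<tau> g"
      and "g \<in> L2_on \<tau>" and "L2_norm_sq \<tau> g \<noteq> 0"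
      using \<open>x \<in> S\<close> unfolding S_def by blast
    then have "L2_norm_sq \<tau> g > 0"
      by (simp add: L2_norm_sq_def order_less_le)
    moreover have "\<bar>Re (A_form K h \<tau> g)\<bar> \<le> B * L2_norm_sq \<tau> g"
      using bound[OF \<open>g \<in> L2_on \<tau>\<close>] abs_Re_le_cmod order_trans by blast
    ultimately show ?thesis
      by (simp add: x abs_divide pos_divide_le_eq)
  qed
  have "(\<lambda>_. 1) \<in> L2_on \<tau>" and "L2_norm_sq \<tau> (\<lambda>_. 1) = \<tau>"
    using \<open>\<tau> > 0\<close> by (simp_all add: L2_on_def L2_norm_sq_def measure_restrict_space)
  then obtain x0 where "x0 \<in> S"
    using \<open>\<tau> > 0\<close> unfolding S_def by fastforce
  have "bdd_above S"
    using S_bound by (intro bdd_aboveI[of _ B]) (auto simp: abs_le_iff)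
  then have "- B \<le> Sup S"
    using S_bound[OF \<open>x0 \<in> S\<close>] cSup_upper[OF \<open>x0 \<in> S\<close>] by (auto simp: abs_le_iff)
  moreover have "Sup S \<le> B"
    using S_bound \<open>x0 \<in> S\<close> by (intro cSup_least) (auto simp: abs_le_iff)
  ultimately show ?thesis
    by (simp add: lambda1_def S_def[symmetric])
qed

section \<open>Semigroups of isometries\<close>

locale isometry_semigroup =
  fixes K :: "real \<Rightarrow> 'a::chilbert_space \<Rightarrow> 'a"
  assumes semigroup: "strongly_cont_isometry_semigroup K"
begin

lemma K_add: "s \<ge> 0 \<Longrightarrow> K s (x + y) = K s x + K s y"
  using semigroup unfolding strongly_cont_isometry_semigroup_def by blast

lemma K_scaleC: "s \<ge> 0 \<Longrightarrow> K s (c *\<^sub>C x) = c *\<^sub>C K s x"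
  using semigroup unfolding strongly_cont_isometry_semigroup_def by blast

lemma norm_K: "s \<ge> 0 \<Longrightarrow> norm (K s x) = norm x"
  using semigroup unfolding strongly_cont_isometry_semigroup_def by blast

lemma K_K: "s \<ge> 0 \<Longrightarrow> t \<ge> 0 \<Longrightarrow> K s (K t x) = K (s + t) x"
  using semigroup unfolding strongly_cont_isometry_semigroup_def by (metis comp_apply)

lemma bounded_linear_K: "s \<ge> 0 \<Longrightarrow> bounded_linear (K s)"
  by (rule bounded_linear_intro[where K=1]) (auto simp: K_add K_scaleC norm_K scaleR_scaleC)

text \<open>An isometry preserves the real parts of inner products by the polarization identity;
  applying this to \<open>\<i> y\<close> gives the imaginary parts.\<close>
lemma cinner_K_K:
  assumes "s \<ge> 0"
  shows "cinner (K s x) (K s y) = cinner x y"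
proof -
  have Re_eq: "Re (cinner (K s u) (K s v)) = Re (cinner u v)" for u v
    using power2_norm_add[of "K s u" "K s v"] power2_norm_add[of u v]
    by (simp add: norm_K assms flip: K_add)
  have "Re (cinner (K s x) (K s (\<i> *\<^sub>C y))) = Re (cinner x (\<i> *\<^sub>C y))"
    by (rule Re_eq)
  then have "Im (cinner (K s x) (K s y)) = Im (cinner x y)"
    by (simp add: K_scaleC assms cinner_scaleC_right)
  with Re_eq[of x y] show ?thesis
    by (simp add: complex_eqI)
qed

lemma closed_range_K:
  assumes "s \<ge> 0"
  shows "closed (range (K s))"
proof -
  have "complete (K s ` UNIV)"
    by (rule complete_isometric_image[where e=1])
       (auto simp: bounded_linear_K assms norm_K complete_UNIV)
  then show ?thesis
    by (rule complete_imp_closed)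
qed

lemma csubspace_range_K:
  assumes "s \<ge> 0"
  shows "csubspace (range (K s))"
proof -
  have "0 = K s 0"
    using K_add[OF assms, of 0 0] by simp
  then show ?thesis
    unfolding csubspace_def by (auto simp flip: K_add[OF assms] K_scaleC[OF assms])
qed

lemma range_K_antimono:
  assumes "0 \<le> r" "r \<le> t"
  shows "range (K t) \<subseteq> range (K r)"
proof
  fix x
  assume "x \<in> range (K t)"
  then obtain u where "x = K t u"
    by blast
  then have "x = K r (K (t - r) u)"
    using K_K[of r "t - r" u] assms by simp
  then show "x \<in> range (K r)"
    by blast
qed

lemma unitary_part_eq: "unitary_part K = (\<Inter>n. range (K (real n)))"
proof -
  have "(\<Inter>n. range (K (real n))) \<subseteq> range (K s)" if "s \<ge> 0" for s
  proof -
    have "range (K (real (nat \<lceil>s\<rceil>))) \<subseteq> range (K s)"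
      by (rule range_K_antimono) (use that real_nat_ceiling_ge in auto)
    then show ?thesis
      by blast
  qed
  then show ?thesis
    unfolding unitary_part_def by auto
qed

lemma norm_cinner_orbit:
  assumes "s \<ge> 0" "t \<ge> 0"
  shows "cmod (cinner (K s h) (K t h)) = cmod (cinner (K \<bar>s - t\<bar> h) h)"
proof (cases "t \<le> s")
  case True
  then have "cinner (K s h) (K t h) = cinner (K t (K (s - t) h)) (K t h)"
    using K_K[of t "s - t" h] assms by simp
  then show ?thesis
    using True assms by (simp add: cinner_K_K)
next
  case False
  then have "cinner (K s h) (K t h) = cinner (K s h) (K s (K (t - s) h))"
    using K_K[of s "t - s" h] assms by simp
  also have "\<dots> = cnj (cinner (K (t - s) h) h)"
    using assms by (simp add: cinner_K_K flip: cinner_commute)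
  finally show ?thesis
    using False by simp
qed

lemma norm_cinner_orbit_le:
  assumes "s \<ge> 0" "t \<ge> 0"
  shows "cmod (cinner (K s h) (K t h)) \<le> (norm h)\<^sup>2"
  using norm_cinner_le[of "K s h" "K t h"] assms by (simp add: norm_K power2_eq_square)

lemma cinner_orbit_tendsto_zero:
  assumes "h \<in> nonunitary_part K"
  shows "((\<lambda>r. cinner (K r h) h) \<longlongrightarrow> 0) at_top"
proof -
  have "\<exists>p\<in>range (K (real n)). \<forall>m\<in>range (K (real n)). cinner (h - p) m = 0" for n
    by (rule orthogonal_projection_exists) (simp_all add: closed_range_K csubspace_range_K)
  then obtain P where P: "\<And>n. P n \<in> range (K (real n))"
    and orth: "\<And>n m. m \<in> range (K (real n)) \<Longrightarrow> cinner (h - P n) m = 0"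
    by metis
  have dec: "decseq (\<lambda>n. range (K (real n)))"
    unfolding decseq_def by (intro allI impI range_K_antimono) auto
  then obtain y where "P \<longlonglongrightarrow> y" and y: "\<And>n. y \<in> range (K (real n))"
    and orth_y: "\<And>m. m \<in> (\<Inter>n. range (K (real n))) \<Longrightarrow> cinner (h - y) m = 0"
    using projections_decseq_tendsto[of "\<lambda>n. range (K (real n))" P h,
        OF dec closed_range_K[OF of_nat_0_le_iff] P orth] by blast
  moreover have "cinner h y = 0"
    using assms y by (simp add: nonunitary_part_def unitary_part_eq)
  moreover have "cinner (h - y) y = 0"
    using orth_y y by blast
  ultimately have "P \<longlonglongrightarrow> 0"
    by (simp add: cinner_diff_left)
  have bound: "cmod (cinner (K r h) h) \<le> norm h * norm (P (nat \<lfloor>r\<rfloor>))" if "r \<ge> 0" for r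
  proof -
    have "K r h \<in> range (K (real (nat \<lfloor>r\<rfloor>)))"
      using range_K_antimono[of "real (nat \<lfloor>r\<rfloor>)" r] that by auto
    then have "cinner (h - P (nat \<lfloor>r\<rfloor>)) (K r h) = 0"
      by (rule orth)
    then have "cinner (K r h) (h - P (nat \<lfloor>r\<rfloor>)) = 0"
      by (subst cinner_commute) simp
    then have "cinner (K r h) h = cinner (K r h) (P (nat \<lfloor>r\<rfloor>))"
      by (simp add: cinner_diff_right)
    then show ?thesis
      using norm_cinner_le[of "K r h" "P (nat \<lfloor>r\<rfloor>)"] that by (simp add: norm_K)
  qed
  have "((\<lambda>r. norm h * norm (P (nat \<lfloor>r\<rfloor>))) \<longlongrightarrow> 0) at_top"
    using filterlim_compose[OF \<open>P \<longlonglongrightarrow> 0\<close>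
        filterlim_compose[OF filterlim_nat_sequentially filterlim_floor_sequentially]]
    by (intro tendsto_mult_right_zero tendsto_norm_zero) (simp add: comp_def)
  moreover have "\<forall>\<^sub>F r in at_top. norm (cinner (K r h) h) \<le> norm h * norm (P (nat \<lfloor>r\<rfloor>))"
    using eventually_ge_at_top[of 0] by eventually_elim (use bound in auto)
  ultimately show ?thesis
    by (rule Lim_null_comparison[rotated])
qed

lemma eventually_abs_lambda1_le:
  assumes "h \<in> nonunitary_part K" "e > 0"
  shows "\<forall>\<^sub>F \<tau> in at_top. \<bar>lambda1 K h \<tau>\<bar> \<le> 2 * e"
proof -
  have "\<forall>\<^sub>F r in at_top. cmod (cinner (K r h) h) < e"
    using cinner_orbit_tendsto_zero[OF assms(1)] \<open>e > 0\<close> by (simp add: tendsto_iff)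
  then obtain R0 where R0: "\<And>r. r \<ge> R0 \<Longrightarrow> cmod (cinner (K r h) h) < e"
    unfolding eventually_at_top_linorder by blast
  define R where "R = max R0 0"
  define B where "B = (norm h)\<^sup>2"
  have "B \<ge> 0"
    by (simp add: B_def)
  have "\<bar>lambda1 K h \<tau>\<bar> \<le> 2 * e" if \<tau>: "\<tau> \<ge> max 1 (2 * R * B\<^sup>2 / e\<^sup>2)" for \<tau>
  proof (rule abs_lambda1_le)
    show "\<tau> > 0"
      using \<tau> by simp
    have "B\<^sup>2 * (2 * R * \<tau>) \<le> (e * \<tau>)\<^sup>2"
      using \<tau> \<open>e > 0\<close> by (simp add: field_simps power2_eq_square mult_right_mono)
    then have "sqrt (B\<^sup>2 * (2 * R * \<tau>)) \<le> sqrt ((e * \<tau>)\<^sup>2)"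
      by (rule real_sqrt_le_mono)
    then have long: "B * sqrt (2 * R * \<tau>) \<le> e * \<tau>"
      using \<open>e > 0\<close> \<open>\<tau> > 0\<close> \<open>B \<ge> 0\<close> by (simp add: real_sqrt_mult)
    fix g
    assume "g \<in> L2_on \<tau>"
    show "cmod (A_form K h \<tau> g) \<le> 2 * e * L2_norm_sq \<tau> g"
      unfolding A_form_def A_op_def
    proof (rule banded_kernel_form_bound[OF \<open>\<tau> > 0\<close> \<open>g \<in> L2_on \<tau>\<close> _ _ _ _ _ long])
      fix s t
      assume "s \<in> {0..\<tau>}" "t \<in> {0..\<tau>}"
      then show "cmod (cinner (K s h) (K t h)) \<le> B"
        by (simp add: B_def norm_cinner_orbit_le)
      assume "R \<le> \<bar>s - t\<bar>"
      then show "cmod (cinner (K s h) (K t h)) \<le> e"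
        using R0[of "\<bar>s - t\<bar>"] \<open>s \<in> {0..\<tau>}\<close> \<open>t \<in> {0..\<tau>}\<close>
        by (simp add: R_def norm_cinner_orbit)
    qed (use \<open>e > 0\<close> in \<open>simp_all add: R_def B_def\<close>)
  qed
  then show ?thesis
    unfolding eventually_at_top_linorder by blast
qed

end

theorem proposition2:
  fixes K :: "real \<Rightarrow> 'a::chilbert_space \<Rightarrow> 'a" and h :: 'a
  assumes "strongly_cont_isometry_semigroup K"
    and "h \<in> nonunitary_part K"
  shows "((\<lambda>\<tau>. lambda1 K h \<tau>) \<longlongrightarrow> 0) at_top"
proof -
  interpret isometry_semigroup K
    by (rule isometry_semigroup.intro[OF assms(1)])
  have "\<forall>\<^sub>F \<tau> in at_top. dist (lambda1 K h \<tau>) 0 < e" if "e > 0" for e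
    using eventually_abs_lambda1_le[OF assms(2), of "e / 4"] that
    by (auto elim: eventually_mono)
  then show ?thesis
    by (rule tendstoI)
qed

end
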